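(* Fix $r\in(0,|\xi|_c)$ and let $\mathcal{S}=\{s>0:\alpha(r;s)<0\}$ (which is nonempty). For $s\in\mathcal{S}$ put $\lambda(r;s)=\sqrt{-\alpha(r;s)}>0$. Then there exists a unique $s\in\mathcal{S}$ such that $s=\lambda(r;s)$.
   Context: Fix $b,g>0$, $\rho_+>\rho_->0$, $\mu_\pm>0$, $\sigma_\pm\ge0$ (either both zero or both positive); $[\![\rho]\!]=\rho_+-\rho_-$. Let $\rho(x_3),\mu(x_3)$ equal $\rho_+,\mu_+$ on $(0,1)$ and $\rho_-,\mu_-$ on $(-b,0)$. $X=\{\psi\in H^2((-b,1)):\psi(-b)=\psi'(-b)=0\}$. For $r>0,s>0$: $E(\psi;r,s)=\frac12\int_{-b}^1s\mu(4r^2|\psi'|^2+|r^2\psi+\psi''|^2)dx_3+\frac12r^2(\sigma_+r^2+g\rho_+)|\psi(1)|^2+\frac12r^2(\sigma_-r^2-g[\![\rho]\!])|\psi(0)|^2$, $J(\psi;r)=\frac12\int_{-b}^1\rho(r^2|\psi|^2+|\psi'|^2)dx_3$, $\alpha(r;s)=\inf\{E(\psi;r,s):\psi\in X,\ J(\psi;r)=1\}$. $|\xi|_c=\sqrt{g[\![\rho]\!]/\sigma_-}$ if $\sigma_->0$, $|\xi|_c=\infty$ if $\sigma_-=0$. *)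

theory Defs
  imports "HOL-Analysis.Analysis"
begin

text \<open>Piecewise constant coefficient: value ap on (0,1), am on (-b,0)
  (the value at the single point 0 is irrelevant for integrals).\<close>
definition pw :: "real \<Rightarrow> real \<Rightarrow> real \<Rightarrow> real" where
  "pw ap am x = (if 0 < x then ap else am)"

text \<open>Membership of psi in X = {psi in H^2((-b,1)) : psi(-b) = psi'(-b) = 0},
  given together with its (weak) first and second derivatives d1, d2.
  In one dimension, psi in H^2((-b,1)) with psi(-b)=psi'(-b)=0 means exactly:
  d2 in L^2(-b,1), d1(x) = int_{-b}^x d2 and psi(x) = int_{-b}^x d1 on [-b,1].\<close>
definition inX :: "real \<Rightarrow> (real \<Rightarrow> real) \<Rightarrow> (real \<Rightarrow> real) \<Rightarrow> (real \<Rightarrow> real) \<Rightarrow> bool" where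
  "inX b psi d1 d2 \<longleftrightarrow>
     d2 absolutely_integrable_on {-b..1} \<and>
     (\<lambda>x. (d2 x)\<^sup>2) integrable_on {-b..1} \<and>
     (\<forall>x\<in>{-b..1}. d1 x = integral {-b..x} d2 \<and> psi x = integral {-b..x} d1)"

definition energyE ::
  "real \<Rightarrow> real \<Rightarrow> real \<Rightarrow> real \<Rightarrow> real \<Rightarrow> real \<Rightarrow> real \<Rightarrow> real \<Rightarrow>
   (real \<Rightarrow> real) \<Rightarrow> (real \<Rightarrow> real) \<Rightarrow> (real \<Rightarrow> real) \<Rightarrow> real \<Rightarrow> real \<Rightarrow> real" where
  "energyE b g rhop rhom mup mum sigp sigm psi d1 d2 r s =
     1/2 * integral {-b..1} (\<lambda>x. s * pw mup mum x *
        (4 * r\<^sup>2 * (d1 x)\<^sup>2 + (r\<^sup>2 * psi x + d2 x)\<^sup>2))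
     + 1/2 * r\<^sup>2 * (sigp * r\<^sup>2 + g * rhop) * (psi 1)\<^sup>2
     + 1/2 * r\<^sup>2 * (sigm * r\<^sup>2 - g * (rhop - rhom)) * (psi 0)\<^sup>2"

definition functionalJ ::
  "real \<Rightarrow> real \<Rightarrow> real \<Rightarrow> (real \<Rightarrow> real) \<Rightarrow> (real \<Rightarrow> real) \<Rightarrow> real \<Rightarrow> real" where
  "functionalJ b rhop rhom psi d1 r =
     1/2 * integral {-b..1} (\<lambda>x. pw rhop rhom x * (r\<^sup>2 * (psi x)\<^sup>2 + (d1 x)\<^sup>2))"

definition alpha ::
  "real \<Rightarrow> real \<Rightarrow> real \<Rightarrow> real \<Rightarrow> real \<Rightarrow> real \<Rightarrow> real \<Rightarrow> real \<Rightarrow> real \<Rightarrow> real \<Rightarrow> real" where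
  "alpha b g rhop rhom mup mum sigp sigm r s =
     Inf {energyE b g rhop rhom mup mum sigp sigm psi d1 d2 r s | psi d1 d2.
            inX b psi d1 d2 \<and> functionalJ b rhop rhom psi d1 r = 1}"

text \<open>r < |xi|_c, where |xi|_c = sqrt(g [rho] / sigma_-) if sigma_- > 0 and infinity otherwise.\<close>
definition below_crit :: "real \<Rightarrow> real \<Rightarrow> real \<Rightarrow> real \<Rightarrow> real \<Rightarrow> bool" where
  "below_crit g rhop rhom sigm r \<longleftrightarrow>
     (sigm > 0 \<longrightarrow> r < sqrt (g * (rhop - rhom) / sigm))"

end

(*
  The energy is affine in the viscosity scale: E = s * dissipation + interface energy, with
  nonnegative dissipation. Hence alpha(r; .) is the lower envelope of a family of nondecreasing
  affine functions of s, so it is nondecreasing and concave, hence continuous, on (0, oo).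
  On the constraint set J = 1 the Cauchy-Schwarz inequality bounds |psi(0)|^2 uniformly, so the
  interface energy is bounded below; below the critical wave number the coefficient of
  |psi(0)|^2 is negative, and a test function with psi(1) = 0 makes it negative. The solutions
  of s = sqrt(-alpha(r; s)) are the zeros of s^2 + alpha(r; s), which is strictly increasing,
  negative for small s and positive for large s, so there is exactly one.
*)

theory Submission
  imports Defs
begin

definition lower_envelope :: "'a set \<Rightarrow> ('a \<Rightarrow> real) \<Rightarrow> ('a \<Rightarrow> real) \<Rightarrow> real \<Rightarrow> real" where
  "lower_envelope T A B s = Inf ((\<lambda>t. s * A t + B t) ` T)"

locale affine_family =
  fixes T :: "'a set" and A B :: "'a \<Rightarrow> real" and D :: real
  assumes nonempty: "T \<noteq> {}"
    and slope_nonneg: "t \<in> T \<Longrightarrow> 0 \<le> A t"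
    and intercept_lower_bound: "t \<in> T \<Longrightarrow> -D \<le> B t"
begin

abbreviation env :: "real \<Rightarrow> real" where
  "env \<equiv> lower_envelope T A B"

lemma affine_lower_bound: "0 \<le> s \<Longrightarrow> t \<in> T \<Longrightarrow> -D \<le> s * A t + B t"
  using slope_nonneg[of t] intercept_lower_bound[of t] mult_nonneg_nonneg[of s "A t"] by linarith

lemma env_le: "0 \<le> s \<Longrightarrow> t \<in> T \<Longrightarrow> env s \<le> s * A t + B t"
  unfolding lower_envelope_def using affine_lower_bound by (auto intro!: cInf_lower bdd_belowI)

lemma env_greatest: "(\<And>t. t \<in> T \<Longrightarrow> c \<le> s * A t + B t) \<Longrightarrow> c \<le> env s"
  unfolding lower_envelope_def using nonempty by (auto intro!: cInf_greatest)

lemma env_ge: "0 \<le> s \<Longrightarrow> -D \<le> env s"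
  using affine_lower_bound by (auto intro: env_greatest)

lemma env_mono: "0 \<le> s1 \<Longrightarrow> s1 \<le> s2 \<Longrightarrow> env s1 \<le> env s2"
  by (intro env_greatest order.trans[OF env_le add_right_mono])
     (auto intro: mult_right_mono slope_nonneg)

lemma env_concave: "concave_on {0<..} env"
  unfolding concave_on_iff
proof (intro conjI convex_real_interval ballI allI impI)
  fix x y u v :: real
  assume "x \<in> {0<..}" "y \<in> {0<..}" "0 \<le> u" "0 \<le> v" "u + v = 1"
  then show "u * env x + v * env y \<le> env (u *\<^sub>R x + v *\<^sub>R y)"
  proof (intro env_greatest)
    fix t assume "t \<in> T"
    then have "u * env x + v * env y \<le> u * (x * A t + B t) + v * (y * A t + B t)"
      using \<open>x \<in> {0<..}\<close> \<open>y \<in> {0<..}\<close> \<open>0 \<le> u\<close> \<open>0 \<le> v\<close>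
      by (intro add_mono mult_left_mono env_le) auto
    also have "\<dots> = (u *\<^sub>R x + v *\<^sub>R y) * A t + B t"
      using \<open>u + v = 1\<close> by (simp add: algebra_simps flip: distrib_right)
    finally show "u * env x + v * env y \<le> (u *\<^sub>R x + v *\<^sub>R y) * A t + B t" .
  qed
qed

lemma env_continuous: "continuous_on {0<..} env"
proof -
  have "continuous_on {0<..} (\<lambda>s. - env s)"
    using env_concave by (intro convex_on_continuous) (auto simp: concave_on_def)
  then show ?thesis
    using continuous_on_minus by fastforce
qed

lemma sqrt_fixed_point_iff:
  assumes "0 < s"
  shows "(env s < 0 \<and> s = sqrt (- env s)) \<longleftrightarrow> s\<^sup>2 + env s = 0"
proof
  assume "env s < 0 \<and> s = sqrt (- env s)"
  then have "s\<^sup>2 = - env s" by (metis real_sqrt_pow2 neg_0_le_iff_le less_imp_le)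
  then show "s\<^sup>2 + env s = 0" by simp
next
  assume "s\<^sup>2 + env s = 0"
  then have "env s = - s\<^sup>2" by (simp add: eq_neg_iff_add_eq_0 add.commute)
  then show "env s < 0 \<and> s = sqrt (- env s)" using assms by simp
qed

lemma square_plus_env_strict_mono: "0 < s \<Longrightarrow> s < y \<Longrightarrow> s\<^sup>2 + env s < y\<^sup>2 + env y"
  using env_mono[of s y] power_strict_mono[of s y 2] by auto

lemma square_plus_env_has_root:
  assumes t0: "t0 \<in> T" and neg: "B t0 < 0"
  shows "\<exists>s>0. s\<^sup>2 + env s = 0"
proof -
  define f where "f s = s\<^sup>2 + env s" for s
  define lo where "lo = min 1 (- B t0 / (2 * (1 + A t0)))"
  define hi where "hi = D + 1"
  have A0: "0 \<le> A t0" and D0: "0 < D"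
    using slope_nonneg[OF t0] intercept_lower_bound[OF t0] neg by auto
  have "0 < - B t0 / (2 * (1 + A t0))"
    using neg A0 by (intro divide_pos_pos) auto
  then have lo: "0 < lo" "lo \<le> 1"
    by (auto simp: lo_def)
  have "lo * (1 + A t0) \<le> - B t0 / (2 * (1 + A t0)) * (1 + A t0)"
    using A0 by (intro mult_right_mono) (auto simp: lo_def)
  also have "\<dots> = - B t0 / 2"
    using A0 by (simp add: field_simps)
  finally have lo_slope: "lo * (1 + A t0) \<le> - B t0 / 2" .
  \<comment> \<open>for \<open>s \<le> 1\<close> we have \<open>s\<^sup>2 + env s \<le> s * (1 + A t0) + B t0\<close>, which is negative at \<open>lo\<close>\<close>
  have "lo\<^sup>2 \<le> lo" using lo by (simp add: power2_eq_square mult_le_cancel_left1)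
  then have f_lo: "f lo < 0"
    using env_le[of lo t0] t0 lo lo_slope neg unfolding f_def by (simp add: algebra_simps)
  have "hi \<le> hi\<^sup>2" using D0 by (simp add: hi_def power2_eq_square)
  then have f_hi: "0 < f hi"
    using env_ge[of hi] D0 unfolding f_def hi_def by auto
  have "continuous_on {lo..hi} f"
    unfolding f_def using lo(1)
    by (intro continuous_intros continuous_on_subset[OF env_continuous]) auto
  then obtain s where "lo \<le> s" "f s = 0"
    using IVT'[of f lo 0 hi] f_lo f_hi lo D0 by (auto simp: hi_def)
  then show ?thesis
    using lo(1) unfolding f_def by (intro exI[of _ s]) auto
qed

lemma unique_sqrt_fixed_point:
  assumes "t0 \<in> T" and "B t0 < 0"
  shows "\<exists>!s. 0 < s \<and> env s < 0 \<and> s = sqrt (- env s)"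
proof -
  obtain s where s: "0 < s" "s\<^sup>2 + env s = 0"
    using square_plus_env_has_root[OF assms] by blast
  have "y = s" if "0 < y" "y\<^sup>2 + env y = 0" for y
    using square_plus_env_strict_mono[of y s] square_plus_env_strict_mono[of s y] s that
    by (cases y s rule: linorder_cases) auto
  then show ?thesis
    using s sqrt_fixed_point_iff by (intro ex1I[of _ s]) blast+
qed

end

lemma square_integral_le:
  fixes f :: "real \<Rightarrow> real"
  assumes f: "continuous_on {a..x} f" and "a \<le> x"
  shows "(integral {a..x} f)\<^sup>2 \<le> (x - a) * integral {a..x} (\<lambda>y. (f y)\<^sup>2)"
proof (cases "a = x")
  case False
  then have len: "0 < x - a" using \<open>a \<le> x\<close> by simp
  define I1 where "I1 = integral {a..x} f"
  define I2 where "I2 = integral {a..x} (\<lambda>y. (f y)\<^sup>2)"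
  \<comment> \<open>expand \<open>0 \<le> \<integral>(f - k)\<^sup>2\<close> around the mean value \<open>k\<close> of \<open>f\<close>\<close>
  define k where "k = I1 / (x - a)"
  have I1: "(f has_integral I1) {a..x}" and I2: "((\<lambda>y. (f y)\<^sup>2) has_integral I2) {a..x}"
    unfolding I1_def I2_def using f
    by (auto intro!: integrable_integral integrable_continuous_real continuous_intros)
  have "((\<lambda>y. k\<^sup>2) has_integral (x - a) * k\<^sup>2) {a..x}"
    using has_integral_const_real[of "k\<^sup>2" a x] \<open>a \<le> x\<close> by simp
  with I1 I2 have "((\<lambda>y. (f y)\<^sup>2 - 2 * k * f y + k\<^sup>2)
      has_integral I2 - 2 * k * I1 + (x - a) * k\<^sup>2) {a..x}"
    by (intro has_integral_add has_integral_diff has_integral_mult_right)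
  moreover have "(f y)\<^sup>2 - 2 * k * f y + k\<^sup>2 = (f y - k)\<^sup>2" for y
    by (simp add: power2_eq_square algebra_simps)
  ultimately have "((\<lambda>y. (f y - k)\<^sup>2) has_integral I2 - 2 * k * I1 + (x - a) * k\<^sup>2) {a..x}"
    by simp
  then have "0 \<le> I2 - 2 * k * I1 + (x - a) * k\<^sup>2"
    by (rule has_integral_nonneg) simp
  moreover have xk: "(x - a) * k = I1"
    using len by (simp add: k_def)
  moreover have "(x - a) * k\<^sup>2 = I1 * k"
    using xk by (metis mult.assoc power2_eq_square)
  ultimately have "0 \<le> I2 - k * I1"
    by (simp add: mult.commute)
  then have "0 \<le> (x - a) * (I2 - k * I1)"
    using len by simp
  also have "\<dots> = (x - a) * I2 - I1\<^sup>2"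
    using xk by (simp add: power2_eq_square algebra_simps)
  finally show ?thesis
    by (simp add: I1_def I2_def)
qed simp

lemma pw_mult_integrable:
  fixes G :: "real \<Rightarrow> real"
  assumes G: "continuous_on {u..v} G" and "u \<le> 0" "0 \<le> v"
  shows "(\<lambda>x. pw a e x * G x) integrable_on {u..v}"
proof -
  have "(\<lambda>x. e * G x) integrable_on {u..0}"
    using assms by (auto intro!: integrable_continuous_real continuous_intros intro: continuous_on_subset)
  then have neg: "(\<lambda>x. pw a e x * G x) integrable_on {u..0}"
    by (rule integrable_spike_finite[where S="{}", rotated 2]) (auto simp: pw_def)
  have "(\<lambda>x. a * G x) integrable_on {0..v}"
    using assms by (auto intro!: integrable_continuous_real continuous_intros intro: continuous_on_subset)
  then have pos: "(\<lambda>x. pw a e x * G x) integrable_on {0..v}"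
    by (rule integrable_spike_finite[where S="{0}", rotated 2]) (auto simp: pw_def)
  show ?thesis
    using Henstock_Kurzweil_Integration.integrable_combine[OF _ _ neg pos] assms by simp
qed

lemma inX_continuous:
  assumes "inX b psi d1 d2"
  shows "continuous_on {-b..1} d1" "continuous_on {-b..1} psi"
proof -
  have "d2 integrable_on {-b..1}"
    using assms by (auto simp: inX_def absolutely_integrable_on_def)
  then have "continuous_on {-b..1} (\<lambda>x. integral {-b..x} d2)"
    by (rule indefinite_integral_continuous_1)
  then show d1: "continuous_on {-b..1} d1"
    by (rule continuous_on_eq) (use assms in \<open>simp add: inX_def\<close>)
  have "continuous_on {-b..1} (\<lambda>x. integral {-b..x} d1)"
    using d1 by (intro indefinite_integral_continuous_1 integrable_continuous_real)
  then show "continuous_on {-b..1} psi"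
    by (rule continuous_on_eq) (use assms in \<open>simp add: inX_def\<close>)
qed

lemma inX_square_le:
  assumes X: "inX b psi d1 d2" and "0 < b" and x: "x \<in> {-b..1}"
  shows "(psi x)\<^sup>2 \<le> (1 + b) * integral {-b..1} (\<lambda>y. (d1 y)\<^sup>2)"
proof -
  have d1: "continuous_on {-b..1} d1" using inX_continuous[OF X] by simp
  then have d1x: "continuous_on {-b..x} d1"
    using x by (auto intro: continuous_on_subset)
  have "(psi x)\<^sup>2 \<le> (x + b) * integral {-b..x} (\<lambda>y. (d1 y)\<^sup>2)"
    using X x square_integral_le[OF d1x] by (auto simp: inX_def)
  also have "\<dots> \<le> (1 + b) * integral {-b..1} (\<lambda>y. (d1 y)\<^sup>2)"
    using x d1 d1x \<open>0 < b\<close>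
    by (intro mult_mono integral_subset_le integral_nonneg integrable_continuous_real
        continuous_intros) auto
  finally show ?thesis .
qed

lemma functionalJ_ge_integral:
  assumes X: "inX b psi d1 d2" and "0 < b" and "0 \<le> rhom" "rhom \<le> rhop"
  shows "rhom * integral {-b..1} (\<lambda>x. r\<^sup>2 * (psi x)\<^sup>2 + (d1 x)\<^sup>2)
           \<le> 2 * functionalJ b rhop rhom psi d1 r"
proof -
  have G: "continuous_on {-b..1} (\<lambda>x. r\<^sup>2 * (psi x)\<^sup>2 + (d1 x)\<^sup>2)"
    using inX_continuous[OF X] by (intro continuous_intros)
  have "integral {-b..1} (\<lambda>x. rhom * (r\<^sup>2 * (psi x)\<^sup>2 + (d1 x)\<^sup>2))
      \<le> integral {-b..1} (\<lambda>x. pw rhop rhom x * (r\<^sup>2 * (psi x)\<^sup>2 + (d1 x)\<^sup>2))"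
    using G assms inX_continuous[OF X] by (intro integral_le pw_mult_integrable integrable_continuous_real
        continuous_intros mult_right_mono) (auto simp: pw_def)
  then show ?thesis by (simp add: functionalJ_def)
qed

lemma integral_d1_square_le:
  assumes X: "inX b psi d1 d2" and "0 < b" and "0 < rhom" "rhom \<le> rhop"
  shows "integral {-b..1} (\<lambda>x. (d1 x)\<^sup>2) \<le> 2 * functionalJ b rhop rhom psi d1 r / rhom"
proof -
  have d1_le: "integral {-b..1} (\<lambda>x. (d1 x)\<^sup>2)
      \<le> integral {-b..1} (\<lambda>x. r\<^sup>2 * (psi x)\<^sup>2 + (d1 x)\<^sup>2)"
    using inX_continuous[OF X]
    by (intro integral_le integrable_continuous_real continuous_intros) auto
  then have "rhom * integral {-b..1} (\<lambda>x. (d1 x)\<^sup>2) \<le> 2 * functionalJ b rhop rhom psi d1 r"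
    using mult_left_mono[OF d1_le, of rhom]
      functionalJ_ge_integral[OF X \<open>0 < b\<close> _ \<open>rhom \<le> rhop\<close>, of r]
      \<open>0 < rhom\<close> by linarith
  then show ?thesis
    using \<open>0 < rhom\<close> by (simp add: pos_le_divide_eq mult.commute)
qed

lemma functionalJ_pos:
  assumes X: "inX b psi d1 d2" and "0 < b" and "0 < rhom" "rhom \<le> rhop" and "0 < r"
    and z: "z \<in> {-b..1}" "psi z \<noteq> 0"
  shows "0 < functionalJ b rhop rhom psi d1 r"
proof -
  define G where "G x = r\<^sup>2 * (psi x)\<^sup>2 + (d1 x)\<^sup>2" for x
  have G: "continuous_on {-b..1} G"
    unfolding G_def using inX_continuous[OF X] by (intro continuous_intros)
  have "0 < G z" using z \<open>0 < r\<close> by (simp add: G_def add_pos_nonneg)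
  moreover have "integral {-b..1} G = 0 \<longleftrightarrow> (\<forall>x\<in>{-b..1}. G x = 0)"
    using integral_cbox_eq_0_iff[of "-b" 1 G] G \<open>0 < b\<close> by (simp add: G_def)
  moreover have "0 \<le> integral {-b..1} G"
    using G by (intro integral_nonneg integrable_continuous_real) (auto simp: G_def)
  ultimately have "0 < rhom * integral {-b..1} G"
    using z \<open>0 < rhom\<close> by fastforce
  then show ?thesis
    using functionalJ_ge_integral[OF X \<open>0 < b\<close> _ \<open>rhom \<le> rhop\<close>, of r] \<open>0 < rhom\<close>
    unfolding G_def by linarith
qed

lemma inX_of_derivatives:
  assumes p: "\<And>x. (p has_real_derivative q x) (at x)"
    and q: "\<And>x. (q has_real_derivative w x) (at x)"
    and w: "continuous_on {-b..1} w" and "p (-b) = 0" "q (-b) = 0"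
  shows "inX b p q w"
proof -
  have ftc: "(f' has_integral f x - f (-b)) {-b..x}"
    if "\<And>y. (f has_real_derivative f' y) (at y)" "-b \<le> x" for f f' :: "real \<Rightarrow> real" and x
    using that by (intro fundamental_theorem_of_calculus)
      (auto simp flip: has_real_derivative_iff_has_vector_derivative intro: has_field_derivative_at_within)
  have "integral {-b..x} q = p x" "integral {-b..x} w = q x" if "-b \<le> x" for x
    using ftc[OF p that] ftc[OF q that] assms(4,5) by (simp_all add: integral_unique)
  then show ?thesis
    using w by (auto simp: inX_def intro!: absolutely_integrable_continuous_real
        integrable_continuous_real continuous_intros)
qed

lemma inX_scale:
  "inX b psi d1 d2 \<Longrightarrow> inX b (\<lambda>x. c * psi x) (\<lambda>x. c * d1 x) (\<lambda>x. c * d2 x)"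
  by (auto simp: inX_def power_mult_distrib
      dest: absolutely_integrable_scaleR_left[where c = c] integrable_on_mult_right[where c = "c\<^sup>2"])

lemma functionalJ_scale:
  "functionalJ b rhop rhom (\<lambda>x. c * psi x) (\<lambda>x. c * d1 x) r = c\<^sup>2 * functionalJ b rhop rhom psi d1 r"
  by (simp add: functionalJ_def power_mult_distrib algebra_simps flip: integral_mult_right)

lemma exists_normalised_vanishing_at_top:
  assumes "0 < b" "0 < r" "0 < rhom" "rhom \<le> rhop"
  shows "\<exists>psi d1 d2. inX b psi d1 d2 \<and> functionalJ b rhop rhom psi d1 r = 1 \<and> psi 1 = 0 \<and> psi 0 \<noteq> 0"
proof -
  define p where "p x = (x + b)\<^sup>2 * (1 - x)" for x :: real
  define q where "q x = 2 * (x + b) * (1 - x) - (x + b)\<^sup>2" for x :: real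
  define w where "w x = 2 - 6 * x - 4 * b" for x :: real
  have X: "inX b p q w"
  proof (rule inX_of_derivatives)
    show "(p has_real_derivative q x) (at x)" "(q has_real_derivative w x) (at x)" for x
      unfolding p_def q_def w_def
      by (auto intro!: derivative_eq_intros simp: algebra_simps power2_eq_square)
  qed (auto simp: p_def q_def w_def intro!: continuous_intros)
  define J where "J = functionalJ b rhop rhom p q r"
  have "p 0 \<noteq> 0" using \<open>0 < b\<close> by (simp add: p_def)
  then have "0 < J"
    unfolding J_def using assms by (intro functionalJ_pos[OF X, where z = 0]) auto
  define c where "c = 1 / sqrt J"
  have "inX b (\<lambda>x. c * p x) (\<lambda>x. c * q x) (\<lambda>x. c * w x)"
    using X by (rule inX_scale)
  moreover have "functionalJ b rhop rhom (\<lambda>x. c * p x) (\<lambda>x. c * q x) r = c\<^sup>2 * J"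
    unfolding J_def by (rule functionalJ_scale)
  moreover have "c\<^sup>2 * J = 1"
    using \<open>0 < J\<close> by (simp add: c_def power_divide)
  moreover have "c * p 1 = 0" "c * p 0 \<noteq> 0"
    using \<open>0 < J\<close> \<open>p 0 \<noteq> 0\<close> by (simp_all add: p_def c_def)
  ultimately show ?thesis by metis
qed

definition constraint_set :: "real \<Rightarrow> real \<Rightarrow> real \<Rightarrow> real \<Rightarrow>
    ((real \<Rightarrow> real) \<times> (real \<Rightarrow> real) \<times> (real \<Rightarrow> real)) set" where
  "constraint_set b rhop rhom r = {(psi, d1, d2). inX b psi d1 d2 \<and> functionalJ b rhop rhom psi d1 r = 1}"

definition dissipation ::
  "real \<Rightarrow> real \<Rightarrow> real \<Rightarrow> real \<Rightarrow> (real \<Rightarrow> real) \<Rightarrow> (real \<Rightarrow> real) \<Rightarrow> (real \<Rightarrow> real) \<Rightarrow> real" where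
  "dissipation b mup mum r psi d1 d2 =
     1/2 * integral {-b..1} (\<lambda>x. pw mup mum x * (4 * r\<^sup>2 * (d1 x)\<^sup>2 + (r\<^sup>2 * psi x + d2 x)\<^sup>2))"

definition interface_energy ::
  "real \<Rightarrow> real \<Rightarrow> real \<Rightarrow> real \<Rightarrow> real \<Rightarrow> real \<Rightarrow> (real \<Rightarrow> real) \<Rightarrow> real" where
  "interface_energy g rhop rhom sigp sigm r psi =
     1/2 * r\<^sup>2 * (sigp * r\<^sup>2 + g * rhop) * (psi 1)\<^sup>2
     + 1/2 * r\<^sup>2 * (sigm * r\<^sup>2 - g * (rhop - rhom)) * (psi 0)\<^sup>2"

lemma energyE_eq:
  "energyE b g rhop rhom mup mum sigp sigm psi d1 d2 r s
     = s * dissipation b mup mum r psi d1 d2 + interface_energy g rhop rhom sigp sigm r psi"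
  by (simp add: energyE_def dissipation_def interface_energy_def mult.assoc flip: integral_mult_right)

lemma alpha_eq_lower_envelope:
  "alpha b g rhop rhom mup mum sigp sigm r s =
     lower_envelope (constraint_set b rhop rhom r)
       (\<lambda>(psi, d1, d2). dissipation b mup mum r psi d1 d2)
       (\<lambda>(psi, d1, d2). interface_energy g rhop rhom sigp sigm r psi) s"
  unfolding alpha_def lower_envelope_def constraint_set_def energyE_eq
  by (rule arg_cong[where f = Inf]) (auto simp: image_def)

lemma dissipation_nonneg: "0 < mup \<Longrightarrow> 0 < mum \<Longrightarrow> 0 \<le> dissipation b mup mum r psi d1 d2"
  unfolding dissipation_def
  by (cases "(\<lambda>x. pw mup mum x * (4 * r\<^sup>2 * (d1 x)\<^sup>2 + (r\<^sup>2 * psi x + d2 x)\<^sup>2)) integrable_on {-b..1}")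
    (auto simp: pw_def not_integrable_integral intro!: integral_nonneg)

lemma interface_energy_ge:
  assumes X: "inX b psi d1 d2" and J: "functionalJ b rhop rhom psi d1 r = 1"
    and "0 < b" "0 < rhom" "rhom \<le> rhop" and "0 \<le> sigp * r\<^sup>2 + g * rhop"
  shows "- (r\<^sup>2 * \<bar>sigm * r\<^sup>2 - g * (rhop - rhom)\<bar> * (1 + b) / rhom)
           \<le> interface_energy g rhop rhom sigp sigm r psi"
proof -
  have "(psi 0)\<^sup>2 \<le> (1 + b) * integral {-b..1} (\<lambda>x. (d1 x)\<^sup>2)"
    using inX_square_le[OF X \<open>0 < b\<close>, of 0] \<open>0 < b\<close> by simp
  also have "\<dots> \<le> (1 + b) * (2 / rhom)"
    using integral_d1_square_le[OF X \<open>0 < b\<close> \<open>0 < rhom\<close> \<open>rhom \<le> rhop\<close>, of r] J \<open>0 < b\<close>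
    by (intro mult_left_mono) auto
  finally have "(psi 0)\<^sup>2 \<le> (1 + b) * (2 / rhom)" .
  define k where "k = sigm * r\<^sup>2 - g * (rhop - rhom)"
  have "- (r\<^sup>2 * \<bar>k\<bar> * (1 + b) / rhom) = - (1/2 * r\<^sup>2 * \<bar>k\<bar>) * ((1 + b) * (2 / rhom))"
    using \<open>0 < rhom\<close> by (simp add: field_simps)
  also have "\<dots> \<le> - (1/2 * r\<^sup>2 * \<bar>k\<bar>) * (psi 0)\<^sup>2"
    using \<open>(psi 0)\<^sup>2 \<le> (1 + b) * (2 / rhom)\<close> by (intro mult_left_mono_neg) auto
  also have "\<dots> \<le> 1/2 * r\<^sup>2 * k * (psi 0)\<^sup>2"
    using mult_left_mono[of "- \<bar>k\<bar>" k "1/2 * r\<^sup>2"] by (intro mult_right_mono) auto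
  finally have "- (r\<^sup>2 * \<bar>k\<bar> * (1 + b) / rhom) \<le> 1/2 * r\<^sup>2 * k * (psi 0)\<^sup>2" .
  moreover have "0 \<le> 1/2 * r\<^sup>2 * (sigp * r\<^sup>2 + g * rhop) * (psi 1)\<^sup>2"
    using assms by simp
  ultimately show ?thesis
    unfolding interface_energy_def k_def by linarith
qed

lemma affine_family_energy:
  assumes "0 < b" "0 < r" "0 < rhom" "rhom \<le> rhop" "0 < mup" "0 < mum"
    and "0 \<le> sigp * r\<^sup>2 + g * rhop"
  shows "affine_family (constraint_set b rhop rhom r)
           (\<lambda>(psi, d1, d2). dissipation b mup mum r psi d1 d2)
           (\<lambda>(psi, d1, d2). interface_energy g rhop rhom sigp sigm r psi)
           (r\<^sup>2 * \<bar>sigm * r\<^sup>2 - g * (rhop - rhom)\<bar> * (1 + b) / rhom)"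
proof
  show "constraint_set b rhop rhom r \<noteq> {}"
    using exists_normalised_vanishing_at_top[of b r rhom rhop] assms
    by (auto simp: constraint_set_def)
qed (use assms in \<open>auto simp: constraint_set_def dissipation_nonneg intro!: interface_energy_ge\<close>)

lemma interface_energy_neg:
  assumes "0 < b" "0 < r" "0 < rhom" "rhom \<le> rhop" and "sigm * r\<^sup>2 - g * (rhop - rhom) < 0"
  shows "\<exists>(psi, d1, d2) \<in> constraint_set b rhop rhom r. interface_energy g rhop rhom sigp sigm r psi < 0"
proof -
  obtain psi d1 d2 where t0: "(psi, d1, d2) \<in> constraint_set b rhop rhom r" and "psi 1 = 0" "psi 0 \<noteq> 0"
    using exists_normalised_vanishing_at_top[of b r rhom rhop] assms by (auto simp: constraint_set_def)
  then have "interface_energy g rhop rhom sigp sigm r psi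
      = r\<^sup>2 * (sigm * r\<^sup>2 - g * (rhop - rhom)) * (psi 0)\<^sup>2 / 2"
    by (simp add: interface_energy_def)
  also have "\<dots> < 0"
    using assms \<open>psi 0 \<noteq> 0\<close> by (simp add: mult_pos_neg mult_neg_pos)
  finally show ?thesis
    using t0 by blast
qed

lemma below_crit_interface_coeff_neg:
  assumes "0 < g" "rhom < rhop" "sigm = 0 \<or> 0 < sigm" "0 < r" "below_crit g rhop rhom sigm r"
  shows "sigm * r\<^sup>2 - g * (rhop - rhom) < 0"
  using assms(3)
proof
  assume "0 < sigm"
  then have "r < sqrt (g * (rhop - rhom) / sigm)"
    using assms(5) by (simp add: below_crit_def)
  then have "r\<^sup>2 < g * (rhop - rhom) / sigm"
    using assms(4) by (metis less_imp_le real_sqrt_less_iff real_sqrt_pow2_iff real_sqrt_power zero_less_power)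
  then show ?thesis
    using \<open>0 < sigm\<close> by (simp add: pos_less_divide_eq mult.commute)
qed (use assms in simp)

theorem lemma2p2:
  fixes b g rhop rhom mup mum sigp sigm r :: real
  assumes "b > 0" and "g > 0"
    and "rhop > rhom" and "rhom > 0"
    and "mup > 0" and "mum > 0"
    and "(sigp = 0 \<and> sigm = 0) \<or> (sigp > 0 \<and> sigm > 0)"
    and "r > 0" and "below_crit g rhop rhom sigm r"
  shows "{s. s > 0 \<and> alpha b g rhop rhom mup mum sigp sigm r s < 0} \<noteq> {} \<and>
         (\<exists>!s. s > 0 \<and> alpha b g rhop rhom mup mum sigp sigm r s < 0 \<and>
               s = sqrt (- alpha b g rhop rhom mup mum sigp sigm r s))"
proof -
  let ?C = "constraint_set b rhop rhom r"
  let ?A = "\<lambda>(psi, d1, d2). dissipation b mup mum r psi d1 d2"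
  let ?B = "\<lambda>(psi :: real \<Rightarrow> real, d1 :: real \<Rightarrow> real, d2 :: real \<Rightarrow> real).
              interface_energy g rhop rhom sigp sigm r psi"
  have "sigm * r\<^sup>2 - g * (rhop - rhom) < 0"
    using assms by (intro below_crit_interface_coeff_neg) auto
  then obtain t0 where "t0 \<in> ?C" "?B t0 < 0"
    using interface_energy_neg[of b r rhom rhop sigm g sigp] assms by auto
  moreover have "affine_family ?C ?A ?B (r\<^sup>2 * \<bar>sigm * r\<^sup>2 - g * (rhop - rhom)\<bar> * (1 + b) / rhom)"
    using assms by (intro affine_family_energy) auto
  ultimately have "\<exists>!s. 0 < s \<and> lower_envelope ?C ?A ?B s < 0 \<and> s = sqrt (- lower_envelope ?C ?A ?B s)"
    by (intro affine_family.unique_sqrt_fixed_point)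
  then show ?thesis
    unfolding alpha_eq_lower_envelope by auto
qed

end
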